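(* Let $M,N$ be positive integers, $\mathcal{M}=\{1,\dots,M\}$, and let $\omega_N=\{(x_i,\sigma_i)\}_{i=1}^N$ be i.i.d. with respect to the uniform distribution $\mathbb{P}$ over $\mathbb{S}\times\mathcal{M}$. Then, for any $\epsilon\in(0,1)$, with probability no smaller than $1-\mathcal{B}(\epsilon;N)$, $\omega_N$ is an $\epsilon$-covering of $\mathbb{S}\times\mathcal{M}$, where $$\mathcal{B}(\epsilon;N)=\frac{M\left(1-\frac{\delta\left(\frac12\delta^{-1}(\epsilon)\right)}{M}\right)^N}{\delta\left(\frac14\delta^{-1}(\epsilon)\right)}.$$
   Context: $\mathbb{S}$ is the unit sphere in $\mathbb{R}^n$ and $\mu$ the uniform probability measure on $\mathbb{S}$; the uniform distribution on $\mathbb{S}\times\mathcal{M}$ is the product of $\mu$ and the uniform distribution on $\mathcal{M}$. For $x\in\mathbb{S}$, $\theta\in[0,\pi/2]$, $\mathrm{Cap}(x,\theta)=\{v\in\mathbb{S}:|x^\top v|\ge\cos\theta\}$ and $\delta(\theta)=\mu(\mathrm{Cap}(x,\theta))$; $\delta$ is strictly increasing from $[0,\pi/2]$ onto $[0,1]$ with inverse $\delta^{-1}$. Given $\epsilon\in(0,1)$ and $\theta=\delta^{-1}(\epsilon)$, a set $\omega\subset\mathbb{S}\times\mathcal{M}$ is an $\epsilon$-covering of $\mathbb{S}\times\mathcal{M}$ if for every $(x,\sigma)\in\mathbb{S}\times\mathcal{M}$ there exists $z\in\mathbb{S}$ with $(z,\sigma)\in\omega$ and $|z^\top x|\ge\cos\theta$.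 *)

theory Defs
  imports "HOL-Probability.Probability"
begin

text \<open>Uniform probability measure on the unit sphere of a Euclidean space: the normalized
  cone measure, i.e. the image of the uniform distribution on the punctured unit ball
  under radial projection x \<mapsto> x / norm x (this is the normalized surface measure).\<close>
definition sphere_measure :: "'a::euclidean_space measure" where
  "sphere_measure =
     distr (uniform_measure lborel (ball 0 1 - {0}))
           (restrict_space borel (sphere 0 1)) (\<lambda>x. x /\<^sub>R norm x)"

definition Cap :: "'a::euclidean_space \<Rightarrow> real \<Rightarrow> 'a set" where
  "Cap x \<theta> = {v \<in> sphere 0 1. \<bar>x \<bullet> v\<bar> \<ge> cos \<theta>}"

text \<open>delta(theta) = mu(Cap(x,theta)); independent of the unit vector x by rotation
  invariance, so we fix x to be a standard basis vector.\<close>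
definition cap_delta :: "'a::euclidean_space itself \<Rightarrow> real \<Rightarrow> real" where
  "cap_delta _ \<theta> = measure (sphere_measure :: 'a measure) (Cap (SOME b::'a. b \<in> Basis) \<theta>)"

definition cap_delta_inv :: "'a::euclidean_space itself \<Rightarrow> real \<Rightarrow> real" where
  "cap_delta_inv T \<epsilon> = (THE \<theta>. \<theta> \<in> {0..pi/2} \<and> cap_delta T \<theta> = \<epsilon>)"

definition is_covering :: "'a::euclidean_space itself \<Rightarrow> nat \<Rightarrow> real \<Rightarrow> ('a \<times> nat) set \<Rightarrow> bool" where
  "is_covering T M \<epsilon> \<omega> \<longleftrightarrow>
     (\<forall>x \<in> sphere 0 (1::real). \<forall>\<sigma> \<in> {1..M}.
        \<exists>z \<in> sphere 0 1. (z, \<sigma>) \<in> \<omega> \<and> \<bar>z \<bullet> x\<bar> \<ge> cos (cap_delta_inv T \<epsilon>))"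

definition sphere_label_measure :: "nat \<Rightarrow> ('a::euclidean_space \<times> nat) measure" where
  "sphere_label_measure M = sphere_measure \<Otimes>\<^sub>M uniform_count_measure {1..M}"

end

theory Submission
  imports Defs
begin

text \<open>
  Let \<open>\<theta> = \<delta>\<inverse>(\<epsilon>)\<close>. A maximal set \<open>Y\<close> of unit vectors none of which lies in the
  \<open>\<theta>/2\<close>-cap of another is a net: the caps \<open>Cap(y, \<theta>/2)\<close>, \<open>y \<in> Y\<close>, cover the sphere. By the
  triangle inequality for angles between lines the caps \<open>Cap(y, \<theta>/4)\<close> are pairwise disjoint,
  so \<open>|Y| \<delta>(\<theta>/4) \<le> 1\<close>. If every labelled cap \<open>Cap(y, \<theta>/2) \<times> {\<sigma>}\<close> contains a sample, the
  triangle inequality shows that every \<open>Cap(x, \<theta>) \<times> {\<sigma>}\<close> does, i.e. the samples form an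
  \<open>\<epsilon>\<close>-covering; each of the \<open>|Y| M\<close> labelled caps is missed with probability
  \<open>(1 - \<delta>(\<theta>/2)/M)\<^sup>N\<close>, and the union bound gives the claim.

  That \<open>\<delta>\<inverse>\<close> is well defined needs \<open>\<delta>\<close> continuous and strictly increasing. Both follow
  from writing the sphere measure as the normalised volume of cones: reflections preserve
  Lebesgue measure (by a Vitali packing argument), which makes \<open>\<delta>\<close> independent of the centre,
  and for \<open>n \<ge> 2\<close> the level sets \<open>{v. \<bar>e \<bullet> v\<bar> = c}\<close> are null, since their cones are
  lines or unions of two Lipschitz graphs over a hyperplane.
\<close>

section \<open>Linear isometric involutions preserve Lebesgue measure\<close>

lemma Vitali_packing_open:
  fixes U :: "'a::euclidean_space set"
  assumes U: "open U"
  obtains C :: "('a \<times> real) set" where "countable C"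
    "\<And>i. i \<in> C \<Longrightarrow> 0 < snd i \<and> ball (fst i) (snd i) \<subseteq> U"
    "disjoint_family_on (\<lambda>i. ball (fst i) (snd i)) C"
    "emeasure lborel U = (\<integral>\<^sup>+i. emeasure lborel (ball (fst i) (snd i)) \<partial>count_space C)"
proof -
  define K where "K = {i. 0 < snd i \<and> ball (fst i) (snd i) \<subseteq> U}"
  have small_ball: "\<exists>i. i \<in> K \<and> x \<in> ball (fst i) (snd i) \<and> snd i < d" if "x \<in> U" "0 < d" for x d
  proof -
    have "\<exists>e>0. ball x e \<subseteq> U"
      using U that open_contains_ball_eq by blast
    then obtain e where e: "e > 0" "ball x e \<subseteq> U"
      by blast
    have "ball x (min e (d/2)) \<subseteq> U"
      using e(2) subset_ball[of "min e (d/2)" e x] by simp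
    moreover have "min e (d/2) < d"
      using that by simp
    ultimately show ?thesis
      using e that by (intro exI[of _ "(x, min e (d/2))"]) (simp add: K_def)
  qed
  obtain C where C: "countable C" "C \<subseteq> K"
    "pairwise (\<lambda>i j. disjnt (ball (fst i) (snd i)) (ball (fst j) (snd j))) C"
    "negligible (U - (\<Union>i\<in>C. ball (fst i) (snd i)))"
    using Vitali_covering_theorem_balls[where S=U and K=K and a=fst and r=snd, OF small_ball] by blast
  let ?B = "\<lambda>i. ball (fst i) (snd i)"
  have disj: "disjoint_family_on ?B C"
    using C(3) unfolding disjoint_family_on_def pairwise_def disjnt_def by blast
  have B_sets: "\<Union>(?B ` C) \<in> sets lborel"
    by (simp add: borel_open open_UN)
  have "U - \<Union>(?B ` C) \<in> sets borel"
    using U B_sets by (simp add: borel_open sets.Diff)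
  then have null: "U - \<Union>(?B ` C) \<in> null_sets lborel"
    using C(4) by (simp add: negligible_iff_null_sets null_sets_completion_iff)
  have "U = \<Union>(?B ` C) \<union> (U - \<Union>(?B ` C))"
    using C(2) by (auto simp: K_def)
  then have "emeasure lborel U = emeasure lborel (\<Union>(?B ` C))"
    using emeasure_Un_null_set[OF B_sets null] by simp
  also have "\<dots> = (\<integral>\<^sup>+i. emeasure lborel (?B i) \<partial>count_space C)"
    using C(1) disj by (intro emeasure_UN_countable) auto
  finally show ?thesis
    using that C(1,2) disj by (auto simp: K_def)
qed

locale isometric_involution =
  fixes f :: "'a::euclidean_space \<Rightarrow> 'a"
  assumes linear: "linear f"
    and involutive: "\<And>x. f (f x) = x"
    and inner_preserving: "\<And>x y. f x \<bullet> f y = x \<bullet> y"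
begin

lemma norm_preserving [simp]: "norm (f x) = norm x"
  by (simp add: norm_eq_sqrt_inner inner_preserving)

lemma image_eq_vimage: "f ` X = f -` X"
  using involutive by (auto simp: image_def) metis

lemma borel_measurable: "f \<in> borel_measurable borel"
  using linear by (intro borel_measurable_continuous_onI linear_continuous_on linear_conv_bounded_linear[THEN iffD1])

lemma open_image: "open U \<Longrightarrow> open (f ` U)"
  unfolding image_eq_vimage
  using linear by (intro continuous_open_vimage linear_continuous_at) (simp_all add: linear_conv_bounded_linear)

lemma injective: "inj f"
  by (metis involutive injI)

lemma dist_preserving: "dist (f x) (f y) = dist x y"
  using linear by (simp add: dist_norm linear_diff[symmetric])

lemma image_ball: "f ` ball c r = ball (f c) r"
  unfolding image_eq_vimage using dist_preserving[of "f c"] by (auto simp: involutive)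

text \<open>Pack \<open>U\<close> with disjoint balls up to a null set: their images are disjoint balls
  of the same radii inside \<open>f ` U\<close>.\<close>
lemma emeasure_open_le_image:
  assumes U: "open U"
  shows "emeasure lborel U \<le> emeasure lborel (f ` U)"
proof -
  obtain C :: "('a \<times> real) set" where C: "countable C"
    "\<And>i. i \<in> C \<Longrightarrow> 0 < snd i \<and> ball (fst i) (snd i) \<subseteq> U"
    "disjoint_family_on (\<lambda>i. ball (fst i) (snd i)) C"
    "emeasure lborel U = (\<integral>\<^sup>+i. emeasure lborel (ball (fst i) (snd i)) \<partial>count_space C)"
    using Vitali_packing_open[OF U] by blast
  let ?fB = "\<lambda>i. ball (f (fst i)) (snd i)"
  have "f ` ball (fst i) (snd i) \<inter> f ` ball (fst j) (snd j) = ?fB i \<inter> ?fB j" for i j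
    by (simp only: image_ball)
  then have "disjoint_family_on ?fB C"
    using C(3) unfolding disjoint_family_on_def by (metis image_Int[OF injective] image_empty)
  then have "emeasure lborel (\<Union>(?fB ` C)) = (\<integral>\<^sup>+i. emeasure lborel (?fB i) \<partial>count_space C)"
    using C(1) by (intro emeasure_UN_countable) auto
  also have "\<dots> = emeasure lborel U"
    unfolding C(4) using C(2) by (intro nn_integral_cong) (simp add: emeasure_ball less_imp_le)
  finally have "emeasure lborel U = emeasure lborel (\<Union>(?fB ` C))"
    by simp
  also have "\<dots> \<le> emeasure lborel (f ` U)"
  proof (rule emeasure_mono)
    show "\<Union>(?fB ` C) \<subseteq> f ` U"
      using C(2) unfolding image_ball[symmetric] by (intro UN_least image_mono) auto
    show "f ` U \<in> sets lborel"
      using open_image[OF U] by simp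
  qed
  finally show ?thesis .
qed

lemma distr_lborel: "distr lborel borel f = lborel"
proof (rule measure_eqI_generator_eq[where E="{S. open S}" and \<Omega>=UNIV and A="\<lambda>i. ball 0 (real i)"])
  have open_eq: "emeasure lborel (f ` U) = emeasure lborel U" if "open U" for U
  proof (rule antisym)
    have "emeasure lborel (f ` U) \<le> emeasure lborel (f ` f ` U)"
      by (rule emeasure_open_le_image[OF open_image[OF that]])
    then show "emeasure lborel (f ` U) \<le> emeasure lborel U"
      by (simp add: image_image involutive)
  qed (rule emeasure_open_le_image[OF that])
  then show "emeasure (distr lborel borel f) U = emeasure lborel U" if "U \<in> {S. open S}" for U
    using that borel_measurable by (simp add: emeasure_distr image_eq_vimage[symmetric])
  show "emeasure (distr lborel borel f) (ball 0 (real i)) \<noteq> \<infinity>" for i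
    using open_eq[of "ball 0 (real i)"] emeasure_lborel_ball_finite[of "0::'a" "real i"] borel_measurable
    by (simp add: emeasure_distr image_eq_vimage[symmetric])
  have "x \<in> (\<Union>i. ball (0::'a) (real i))" for x
    using reals_Archimedean2[of "norm x"] by auto
  then show "(\<Union>i. ball (0::'a) (real i)) = UNIV"
    by blast
qed (auto simp: Int_stable_def sets_borel)

lemma measure_image:
  assumes "X \<in> sets borel"
  shows "measure lborel (f ` X) = measure lborel X"
proof -
  have "measure lborel (f ` X) = measure (distr lborel borel f) X"
    using assms borel_measurable by (simp add: measure_distr image_eq_vimage)
  then show ?thesis
    by (simp add: distr_lborel)
qed

end

lemma isometric_involution_reflection:
  fixes u :: "'a::euclidean_space"
  shows "isometric_involution (\<lambda>x. x - (2 * (u \<bullet> x) / (u \<bullet> u)) *\<^sub>R u)" (is "isometric_involution ?r")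
proof (cases "u = 0")
  case False
  then have "u \<bullet> u \<noteq> 0"
    by simp
  have "linear ?r"
    by (rule linearI) (simp_all add: inner_add_right algebra_simps add_divide_distrib scaleR_add_left)
  moreover have "?r (?r x) = x" for x
    using \<open>u \<bullet> u \<noteq> 0\<close> by (simp add: inner_diff_right algebra_simps field_simps)
  moreover have "?r x \<bullet> ?r y = x \<bullet> y" for x y
    using \<open>u \<bullet> u \<noteq> 0\<close> by (simp add: inner_diff_right inner_diff_left algebra_simps field_simps inner_commute)
  ultimately show ?thesis
    by (intro isometric_involution.intro)
qed (unfold_locales, simp_all add: linear_id[unfolded id_def])

lemma exists_isometric_involution:
  fixes x y :: "'a::euclidean_space"
  assumes "norm x = 1" "norm y = 1"
  obtains f where "isometric_involution f" "f x = y"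
proof -
  define u where "u = x - y"
  have "x - (2 * (u \<bullet> x) / (u \<bullet> u)) *\<^sub>R u = y"
  proof (cases "x = y")
    case False
    have "x \<bullet> x = 1" "y \<bullet> y = 1"
      using assms by (simp_all add: dot_square_norm)
    then have uu: "u \<bullet> u = 2 * (u \<bullet> x)"
      unfolding u_def by (simp add: inner_diff_left inner_diff_right inner_commute[of x y])
    have "u \<bullet> u \<noteq> 0"
      using False by (simp add: u_def)
    then have "2 * (u \<bullet> x) / (u \<bullet> u) = 1"
      using uu by simp
    then have "x - (2 * (u \<bullet> x) / (u \<bullet> u)) *\<^sub>R u = x - u"
      by (simp only: scaleR_one)
    then show ?thesis
      by (simp add: u_def)
  qed (simp add: u_def)
  with isometric_involution_reflection[of u] that show ?thesis
    by blast
qed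

section \<open>The sphere measure as normalised volume of cones\<close>

definition pole :: "'a::euclidean_space" where
  "pole = (SOME b. b \<in> Basis)"

lemma pole_in_Basis: "pole \<in> Basis"
  unfolding pole_def by (rule someI_ex) (use nonempty_Basis in blast)

lemma norm_pole [simp]: "norm pole = 1"
  by (rule norm_Basis[OF pole_in_Basis])

lemma cap_delta_eq_measure_Cap_pole:
  "cap_delta TYPE('a::euclidean_space) t = measure sphere_measure (Cap (pole :: 'a) t)"
  by (simp add: cap_delta_def pole_def)

text \<open>The value at the null set \<open>{0}\<close> is irrelevant; it only makes the map land in the sphere.\<close>
definition radial_retraction :: "'a::euclidean_space \<Rightarrow> 'a" where
  "radial_retraction x = (if x = 0 then pole else x /\<^sub>R norm x)"

lemma radial_retraction_measurable:
  "radial_retraction \<in> borel \<rightarrow>\<^sub>M restrict_space borel (sphere (0::'a::euclidean_space) 1)"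
proof (rule measurable_restrict_space2)
  show "radial_retraction \<in> space borel \<rightarrow> sphere (0::'a) 1"
    by (simp add: radial_retraction_def)
  show "radial_retraction \<in> borel \<rightarrow>\<^sub>M (borel :: 'a measure)"
    unfolding radial_retraction_def by measurable
qed

lemma space_sphere_measure [simp]: "space sphere_measure = sphere (0::'a::euclidean_space) 1"
  by (simp add: sphere_measure_def)

lemma sets_sphere_measure:
  "sets sphere_measure = sets (restrict_space borel (sphere (0::'a::euclidean_space) 1))"
  by (simp add: sphere_measure_def)

lemma sets_sphere_measure_iff:
  "A \<in> sets (sphere_measure :: 'a::euclidean_space measure) \<longleftrightarrow> A \<in> sets borel \<and> A \<subseteq> sphere 0 1"
  by (auto simp: sets_sphere_measure sets_restrict_space_iff)

lemma borel_measurable_sphere_measureI: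
  "g \<in> borel_measurable borel \<Longrightarrow> g \<in> borel_measurable (sphere_measure :: 'a::euclidean_space measure)"
  unfolding sphere_measure_def by (simp add: measurable_restrict_space1)

lemma sphere_measure_eq_distr_radial_retraction:
  "(sphere_measure :: 'a::euclidean_space measure) =
     distr (uniform_measure lborel (ball 0 1 - {0})) (restrict_space borel (sphere 0 1)) radial_retraction"
  unfolding sphere_measure_def distr_def
proof (rule measure_of_eq)
  let ?S = "restrict_space borel (sphere (0::'a) 1)"
  let ?U = "uniform_measure lborel (ball 0 1 - {0::'a})"
  show "sets ?S \<subseteq> Pow (space ?S)"
    by (rule sets.space_closed)
  fix A assume "A \<in> sigma_sets (space ?S) (sets ?S)"
  then have A: "A \<in> sets ?S"
    using sets.sigma_sets_eq[of ?S] by simp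
  then have "A \<subseteq> sphere 0 1"
    using sets.sets_into_space by fastforce
  then have eq: "(\<lambda>x. x /\<^sub>R norm x) -` A = radial_retraction -` A - {0}"
    by (auto simp: radial_retraction_def)
  have "radial_retraction -` A \<in> sets borel"
    using measurable_sets[OF radial_retraction_measurable A] by simp
  moreover have "(ball 0 1 - {0}) \<inter> (\<lambda>x. x /\<^sub>R norm x) -` A = (ball 0 1 - {0}) \<inter> radial_retraction -` A"
    unfolding eq by blast
  ultimately show "emeasure ?U ((\<lambda>x. x /\<^sub>R norm x) -` A \<inter> space ?U) =
      emeasure ?U (radial_retraction -` A \<inter> space ?U)"
    unfolding eq by simp
qed

lemma emeasure_punctured_unit_ball:
  "emeasure lborel (ball 0 1 - {0 :: 'a::euclidean_space}) \<noteq> 0"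
  "emeasure lborel (ball 0 1 - {0 :: 'a::euclidean_space}) \<noteq> \<infinity>"
proof -
  have "emeasure lborel (ball 0 1 - {0::'a}) = emeasure lborel (ball (0::'a) 1)"
    by (rule emeasure_Diff_null_set) auto
  then show "emeasure lborel (ball 0 1 - {0::'a}) \<noteq> 0" "emeasure lborel (ball 0 1 - {0::'a}) \<noteq> \<infinity>"
    using emeasure_lborel_ball_finite[of "0::'a" 1] content_ball_pos[of 1 "0::'a"]
    by (auto simp: measure_def)
qed

lemma prob_space_sphere_measure: "prob_space (sphere_measure :: 'a::euclidean_space measure)"
  unfolding sphere_measure_eq_distr_radial_retraction
proof (rule prob_space.prob_space_distr)
  show "prob_space (uniform_measure lborel (ball 0 1 - {0::'a}))"
    by (intro prob_space_uniform_measure emeasure_punctured_unit_ball)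
  show "radial_retraction \<in> uniform_measure lborel (ball 0 1 - {0}) \<rightarrow>\<^sub>M restrict_space borel (sphere (0::'a) 1)"
    using radial_retraction_measurable by (simp cong: measurable_cong_sets)
qed

definition unit_cone :: "'a::euclidean_space set \<Rightarrow> 'a set" where
  "unit_cone A = {x \<in> ball 0 1 - {0}. x /\<^sub>R norm x \<in> A}"

lemma unit_cone_eq_vimage: "unit_cone A = (ball 0 1 - {0}) \<inter> radial_retraction -` A"
  by (auto simp: unit_cone_def radial_retraction_def)

lemma sets_unit_cone:
  "A \<in> sets (sphere_measure :: 'a::euclidean_space measure) \<Longrightarrow> unit_cone A \<in> sets borel"
proof -
  assume "A \<in> sets sphere_measure"
  then have "radial_retraction -` A \<in> sets borel"
    using measurable_sets[OF radial_retraction_measurable, of A] by (simp add: sets_sphere_measure)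
  then show ?thesis
    unfolding unit_cone_eq_vimage by (intro sets.Int borel_open[OF open_delete[OF open_ball]])
qed

lemma measure_sphere_measure:
  fixes A :: "'a::euclidean_space set"
  assumes A: "A \<in> sets sphere_measure"
  shows "measure sphere_measure A = measure lborel (unit_cone A) / measure lborel (ball (0::'a) 1)"
proof -
  let ?U = "uniform_measure lborel (ball 0 1 - {0::'a})"
  have A': "A \<in> sets (restrict_space borel (sphere (0::'a) 1))"
    using A by (simp add: sets_sphere_measure)
  have "radial_retraction \<in> ?U \<rightarrow>\<^sub>M restrict_space borel (sphere 0 1)"
    using radial_retraction_measurable by (simp cong: measurable_cong_sets)
  then have "measure sphere_measure A = measure ?U (radial_retraction -` A)"
    unfolding sphere_measure_eq_distr_radial_retraction using A' by (simp add: measure_distr)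
  also have "\<dots> = measure lborel ((ball 0 1 - {0}) \<inter> radial_retraction -` A) / measure lborel (ball 0 1 - {0::'a})"
    using measurable_sets[OF radial_retraction_measurable A']
    by (intro measure_uniform_measure emeasure_punctured_unit_ball) simp
  also have "measure lborel (ball 0 1 - {0::'a}) = measure lborel (ball (0::'a) 1)"
    by (rule measure_Diff_null_set) auto
  finally show ?thesis
    by (simp add: unit_cone_eq_vimage)
qed

lemma measure_sphere_measure_pos:
  fixes U :: "'a::euclidean_space set"
  assumes "open U" "U \<inter> sphere 0 1 \<noteq> {}"
  shows "0 < measure sphere_measure (U \<inter> sphere 0 1)"
proof -
  let ?C = "unit_cone (U \<inter> sphere 0 1)"
  have "continuous_on (ball 0 1 - {0}) (\<lambda>x::'a. x /\<^sub>R norm x)"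
    by (intro continuous_intros) auto
  then have "open ((ball 0 1 - {0}) \<inter> (\<lambda>x::'a. x /\<^sub>R norm x) -` U)"
    using assms(1) by (intro continuous_open_preimage open_delete open_ball)
  also have "(ball 0 1 - {0}) \<inter> (\<lambda>x::'a. x /\<^sub>R norm x) -` U = ?C"
    by (auto simp: unit_cone_def)
  finally have "open ?C" .
  moreover obtain u where "u \<in> U" "norm u = 1"
    using assms(2) by auto
  then have "u /\<^sub>R 2 \<in> ?C"
    by (auto simp: unit_cone_def)
  ultimately have "\<exists>r>0. ball (u /\<^sub>R 2) r \<subseteq> ?C"
    using open_contains_ball by blast
  then obtain r where r: "0 < r" "ball (u /\<^sub>R 2) r \<subseteq> ?C"
    by blast
  have C_sets: "?C \<in> sets lborel"
    using assms by (simp add: sets_unit_cone sets_sphere_measure_iff borel_open)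
  have "ball 0 1 \<in> fmeasurable (lborel :: 'a measure)"
    by (intro fmeasurableI emeasure_lborel_ball_finite) simp
  then have "?C \<in> fmeasurable lborel"
    by (rule fmeasurableI2[OF _ _ C_sets]) (auto simp: unit_cone_def)
  then have "measure lborel (ball (u /\<^sub>R 2) r) \<le> measure lborel ?C"
    using r(2) by (intro measure_mono_fmeasurable) auto
  then have "0 < measure lborel ?C"
    using content_ball_pos[OF r(1), of "u /\<^sub>R 2"] by linarith
  then show ?thesis
    using assms content_ball_pos[of 1 "0::'a"]
    by (simp add: measure_sphere_measure sets_sphere_measure_iff borel_open)
qed

lemma (in isometric_involution) unit_cone_image: "unit_cone (f ` A) = f ` unit_cone A"
proof -
  have "f (x /\<^sub>R norm x) = f x /\<^sub>R norm (f x)" for x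
    using linear by (simp add: linear_cmul)
  moreover have "f x = 0 \<longleftrightarrow> x = 0" for x
    using norm_preserving[of x] by (metis norm_eq_zero)
  ultimately show ?thesis
    unfolding image_eq_vimage unit_cone_def by auto
qed

lemma (in isometric_involution) sets_sphere_measure_image:
  "A \<in> sets sphere_measure \<Longrightarrow> f ` A \<in> sets sphere_measure"
  using measurable_sets[OF borel_measurable, of A]
  by (auto simp: sets_sphere_measure_iff image_eq_vimage)

lemma (in isometric_involution) measure_sphere_measure_image:
  "A \<in> sets sphere_measure \<Longrightarrow> measure sphere_measure (f ` A) = measure sphere_measure A"
  by (simp add: measure_sphere_measure sets_sphere_measure_image unit_cone_image measure_image
      sets_unit_cone)

lemma sets_Cap: "Cap y t \<in> sets sphere_measure"
proof -
  have "Cap y t = sphere 0 1 \<inter> {v. cos t \<le> \<bar>y \<bullet> v\<bar>}"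
    by (auto simp: Cap_def)
  moreover have "closed (sphere 0 1 \<inter> {v. cos t \<le> \<bar>y \<bullet> v\<bar>})"
    by (intro closed_Int closed_sphere closed_Collect_le continuous_intros)
  ultimately show ?thesis
    by (simp add: sets_sphere_measure_iff borel_closed)
qed

lemma (in isometric_involution) Cap_image: "Cap (f y) t = f ` Cap y t"
proof -
  have "f y \<bullet> v = y \<bullet> f v" for v
    using inner_preserving[of y "f v"] by (simp add: involutive)
  then show ?thesis
    unfolding image_eq_vimage Cap_def by auto
qed

lemma measure_Cap:
  fixes y :: "'a::euclidean_space"
  assumes "norm y = 1"
  shows "measure sphere_measure (Cap y t) = cap_delta TYPE('a) t"
proof -
  obtain f where f: "isometric_involution f" "f pole = y"
    using exists_isometric_involution[OF norm_pole assms] by blast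
  then have "measure sphere_measure (Cap y t) = measure sphere_measure (f ` Cap pole t)"
    using isometric_involution.Cap_image by metis
  also have "\<dots> = measure sphere_measure (Cap (pole::'a) t)"
    using isometric_involution.measure_sphere_measure_image[OF f(1) sets_Cap] .
  finally show ?thesis
    by (simp add: cap_delta_eq_measure_Cap_pole)
qed

section \<open>The cap measure \<open>\<delta>\<close>\<close>

lemma norm_diff_inner_scaleR_unit:
  fixes e x :: "'a::euclidean_space"
  assumes "norm e = 1"
  shows "norm (x - (e \<bullet> x) *\<^sub>R e) ^ 2 = norm x ^ 2 - (e \<bullet> x) ^ 2"
proof -
  have "e \<bullet> e = 1"
    using assms by (simp add: dot_square_norm)
  then show ?thesis
    unfolding power2_norm_eq_inner
    by (simp add: inner_diff_left inner_diff_right inner_commute algebra_simps power2_eq_square)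
qed

lemma negligible_cone_graph:
  fixes e :: "'a::euclidean_space"
  assumes "norm e = 1"
  shows "negligible ((\<lambda>w. w + (k * norm w) *\<^sub>R e) ` {w. e \<bullet> w = 0})"
proof (rule negligible_locally_Lipschitz_image)
  show "negligible {w. e \<bullet> w = 0}"
    using assms by (intro negligible_hyperplane) auto
  have "norm ((y + (k * norm y) *\<^sub>R e) - (x + (k * norm x) *\<^sub>R e)) \<le> (1 + \<bar>k\<bar>) * norm (y - x)"
    for x y :: 'a
  proof -
    have eq: "(y + (k * norm y) *\<^sub>R e) - (x + (k * norm x) *\<^sub>R e) = (y - x) + (k * (norm y - norm x)) *\<^sub>R e"
      by (simp add: algebra_simps)
    have "norm ((y + (k * norm y) *\<^sub>R e) - (x + (k * norm x) *\<^sub>R e)) \<le> norm (y - x) + \<bar>k\<bar> * \<bar>norm y - norm x\<bar>"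
      unfolding eq using norm_triangle_ineq[of "y - x" "(k * (norm y - norm x)) *\<^sub>R e"] assms
      by (simp add: abs_mult)
    also have "\<dots> \<le> (1 + \<bar>k\<bar>) * norm (y - x)"
      using norm_triangle_ineq3[of y x] by (simp add: algebra_simps mult_left_mono)
    finally show ?thesis .
  qed
  then show "\<exists>T B. open T \<and> x \<in> T \<and> (\<forall>y \<in> {w. e \<bullet> w = 0} \<inter> T.
      norm ((y + (k * norm y) *\<^sub>R e) - (x + (k * norm x) *\<^sub>R e)) \<le> B * norm (y - x))" for x
    by blast
qed simp

text \<open>For \<open>0 \<le> c < 1\<close> the cone is the union of two graphs over the hyperplane orthogonal to \<open>e\<close>.\<close>
lemma negligible_cone_level_less_1:
  fixes e :: "'a::euclidean_space"
  assumes e: "norm e = 1" and c: "0 \<le> c" "c < 1"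
  shows "negligible {x. \<bar>e \<bullet> x\<bar> = c * norm x}"
proof -
  define k where "k = c / sqrt (1 - c^2)"
  define g where "g = (\<lambda>k w. w + (k * norm w) *\<^sub>R e)"
  define H where "H = {w::'a. e \<bullet> w = 0}"
  have c2: "0 < 1 - c^2"
    using c by (simp add: abs_square_less_1)
  have "{x. \<bar>e \<bullet> x\<bar> = c * norm x} \<subseteq> g k ` H \<union> g (-k) ` H"
  proof
    fix x assume "x \<in> {x. \<bar>e \<bullet> x\<bar> = c * norm x}"
    then have x: "\<bar>e \<bullet> x\<bar> = c * norm x"
      by simp
    define a where "a = e \<bullet> x"
    define w where "w = x - a *\<^sub>R e"
    have "w \<in> H"
      using e by (simp add: H_def w_def a_def inner_diff_right dot_square_norm)
    have "a^2 = c^2 * norm x ^ 2"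
      using x unfolding a_def by (metis power2_abs power_mult_distrib)
    then have "a^2 * (1 - c^2) = c^2 * (norm x ^ 2 - a^2)"
      by (simp add: algebra_simps)
    also have "\<dots> = c^2 * norm w ^ 2"
      using norm_diff_inner_scaleR_unit[OF e, of x] by (simp add: w_def a_def)
    finally have "a^2 = c^2 * norm w ^ 2 / (1 - c^2)"
      using c2 by (simp add: eq_divide_eq)
    also have "\<dots> = (k * norm w)^2"
      using c2 by (simp add: k_def power_mult_distrib power_divide)
    finally have "a = k * norm w \<or> a = - k * norm w"
      by (simp add: power2_eq_iff)
    moreover have "x = w + a *\<^sub>R e"
      by (simp add: w_def)
    ultimately have "x = g k w \<or> x = g (-k) w"
      unfolding g_def by auto
    then show "x \<in> g k ` H \<union> g (-k) ` H"
      using \<open>w \<in> H\<close> by blast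
  qed
  moreover have "negligible (g k ` H \<union> g (-k) ` H)"
    using negligible_cone_graph[OF e, of k] negligible_cone_graph[OF e, of "-k"]
    by (simp add: g_def H_def)
  ultimately show ?thesis
    by (rule negligible_subset[rotated])
qed

lemma negligible_cone_level_1:
  fixes e :: "'a::euclidean_space"
  assumes "DIM('a) \<ge> 2" "norm e = 1"
  shows "negligible {x. \<bar>e \<bullet> x\<bar> = norm x}"
proof -
  have "{x. \<bar>e \<bullet> x\<bar> = norm x} \<subseteq> span {e}"
  proof
    fix x assume "x \<in> {x. \<bar>e \<bullet> x\<bar> = norm x}"
    then have "\<bar>e \<bullet> x\<bar> ^ 2 = norm x ^ 2"
      by simp
    then have "(e \<bullet> x)^2 = norm x ^ 2"
      by (simp only: power2_abs)
    then have "norm (x - (e \<bullet> x) *\<^sub>R e) = 0"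
      using norm_diff_inner_scaleR_unit[OF assms(2), of x] by simp
    then have "x = (e \<bullet> x) *\<^sub>R e"
      by simp
    then show "x \<in> span {e}"
      by (metis span_base span_scale singletonI)
  qed
  moreover have "negligible (span {e})"
    using assms by (intro negligible_lowdim) auto
  ultimately show ?thesis
    by (rule negligible_subset[rotated])
qed

lemma negligible_cone_level:
  fixes e :: "'a::euclidean_space"
  assumes dim: "DIM('a) \<ge> 2" and e: "norm e = 1"
  shows "negligible {x. x \<noteq> 0 \<and> \<bar>e \<bullet> x\<bar> = c * norm x}"
proof -
  consider "c < 0 \<or> c > 1" | "c = 1" | "0 \<le> c" "c < 1"
    by linarith
  then show ?thesis
  proof cases
    case 1
    have "\<bar>e \<bullet> x\<bar> \<noteq> c * norm x" if "x \<noteq> 0" for x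
    proof -
      have "\<bar>e \<bullet> x\<bar> \<le> norm x"
        using Cauchy_Schwarz_ineq2[of e x] e by simp
      moreover have "c * norm x < 0 \<or> norm x < c * norm x"
        using 1 that by (auto simp: mult_neg_pos)
      ultimately show ?thesis
        by linarith
    qed
    then have "{x. x \<noteq> 0 \<and> \<bar>e \<bullet> x\<bar> = c * norm x} = {}"
      by blast
    then show ?thesis
      by (simp only: negligible_empty)
  next
    case 2
    have "negligible {x. \<bar>e \<bullet> x\<bar> = norm x}"
      by (rule negligible_cone_level_1[OF dim e])
    then show ?thesis
      by (rule negligible_subset) (auto simp: 2)
  next
    case 3
    then have "negligible {x. \<bar>e \<bullet> x\<bar> = c * norm x}"
      by (rule negligible_cone_level_less_1[OF e])
    then show ?thesis
      by (rule negligible_subset) blast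
  qed
qed

lemma sphere_level_null:
  fixes e :: "'a::euclidean_space"
  assumes "DIM('a) \<ge> 2" "norm e = 1"
  shows "{v \<in> sphere 0 1. \<bar>e \<bullet> v\<bar> = c} \<in> null_sets sphere_measure"
proof -
  let ?L = "{v \<in> sphere 0 1. \<bar>e \<bullet> v\<bar> = c}"
  have "?L = sphere 0 1 \<inter> {v. \<bar>e \<bullet> v\<bar> = c}"
    by auto
  moreover have "closed (sphere 0 1 \<inter> {v. \<bar>e \<bullet> v\<bar> = c})"
    by (intro closed_Int closed_sphere closed_Collect_eq continuous_intros)
  ultimately have L_sets: "?L \<in> sets sphere_measure"
    by (simp add: sets_sphere_measure_iff borel_closed)
  have "\<bar>e \<bullet> (x /\<^sub>R norm x)\<bar> = \<bar>e \<bullet> x\<bar> / norm x" for x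
    by (simp add: abs_mult divide_inverse_commute)
  then have "unit_cone ?L \<subseteq> {x. x \<noteq> 0 \<and> \<bar>e \<bullet> x\<bar> = c * norm x}"
    by (auto simp: unit_cone_def field_simps)
  then have "negligible (unit_cone ?L)"
    using negligible_cone_level[OF assms] negligible_subset by blast
  then have "measure lborel (unit_cone ?L) = 0"
    using sets_unit_cone[OF L_sets]
    by (simp add: negligible_iff_null_sets null_sets_completion_iff measure_def null_setsD1)
  then have "measure sphere_measure ?L = 0"
    unfolding measure_sphere_measure[OF L_sets] by simp
  with L_sets show ?thesis
    by (simp add: null_sets_def finite_measure.emeasure_eq_measure[OF
        prob_space.finite_measure[OF prob_space_sphere_measure]])
qed

lemma exists_sphere_inner_eq:
  fixes e :: "'a::euclidean_space"
  assumes "DIM('a) \<ge> 2" "norm e = 1" "\<bar>m\<bar> \<le> 1"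
  obtains v where "v \<in> sphere 0 1" "e \<bullet> v = m"
proof -
  let ?S = "(\<lambda>v. e \<bullet> v) ` sphere 0 1"
  have "connected ?S"
    using connected_sphere[OF assms(1)] by (intro connected_continuous_image continuous_intros)
  moreover have "e \<bullet> (- e) \<in> ?S" "e \<bullet> e \<in> ?S"
    by (rule imageI, use assms(2) in simp)+
  then have "-1 \<in> ?S" "1 \<in> ?S"
    using assms(2) by (simp_all add: dot_square_norm)
  ultimately have "{-1..1} \<subseteq> ?S"
    by (rule connected_contains_Icc)
  moreover have "m \<in> {-1..1}"
    using assms(3) by (simp add: abs_le_iff)
  ultimately have "m \<in> ?S"
    by blast
  with that show ?thesis
    by blast
qed

lemma cap_delta_pi_half: "cap_delta TYPE('a::euclidean_space) (pi/2) = 1"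
proof -
  have "Cap (pole::'a) (pi/2) = space sphere_measure"
    by (auto simp: Cap_def)
  then show ?thesis
    using prob_space.prob_space[OF prob_space_sphere_measure] by (simp add: cap_delta_eq_measure_Cap_pole)
qed

lemma cap_delta_le_1: "cap_delta TYPE('a::euclidean_space) t \<le> 1"
  using prob_space.prob_le_1[OF prob_space_sphere_measure] by (simp add: cap_delta_eq_measure_Cap_pole)

lemma cap_delta_0:
  assumes "DIM('a::euclidean_space) \<ge> 2"
  shows "cap_delta TYPE('a) 0 = 0"
proof -
  have "\<bar>pole \<bullet> v\<bar> \<le> 1" if "norm v = 1" for v :: 'a
    using Cauchy_Schwarz_ineq2[of pole v] that by simp
  then have "Cap (pole::'a) 0 = {v \<in> sphere 0 1. \<bar>pole \<bullet> v\<bar> = 1}"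
    by (force simp: Cap_def)
  then show ?thesis
    using sphere_level_null[OF assms norm_pole, of 1]
    by (simp add: cap_delta_eq_measure_Cap_pole measure_def null_setsD1)
qed

lemma cap_delta_less:
  assumes "DIM('a::euclidean_space) \<ge> 2" "0 \<le> s" "s < t" "t \<le> pi/2"
  shows "cap_delta TYPE('a) s < cap_delta TYPE('a) t"
proof -
  interpret prob_space "sphere_measure :: 'a measure"
    by (rule prob_space_sphere_measure)
  define U where "U = {v::'a. cos t < \<bar>pole \<bullet> v\<bar> \<and> \<bar>pole \<bullet> v\<bar> < cos s}"
  have "open U"
    unfolding U_def by (intro open_Collect_conj open_Collect_less continuous_intros)
  have cos: "cos t < cos s" "0 \<le> cos t"
    using assms by (auto intro!: cos_monotone_0_pi cos_ge_zero)
  define m where "m = (cos s + cos t) / 2"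
  have m: "cos t < m" "m < cos s"
    using cos by (simp_all add: m_def)
  then have "\<bar>m\<bar> \<le> 1"
    using cos(2) cos_le_one[of s] by linarith
  then obtain v :: 'a where "v \<in> sphere 0 1" "pole \<bullet> v = m"
    by (rule exists_sphere_inner_eq[OF assms(1) norm_pole])
  then have "v \<in> U \<inter> sphere 0 1"
    using m cos(2) by (simp add: U_def)
  then have "0 < measure sphere_measure (U \<inter> sphere 0 1)"
    using \<open>open U\<close> by (intro measure_sphere_measure_pos) auto
  also have "\<dots> \<le> measure sphere_measure (Cap (pole::'a) t - Cap pole s)"
    using \<open>open U\<close> by (intro finite_measure_mono)
      (auto simp: U_def Cap_def sets_Cap sets_sphere_measure_iff borel_open)
  also have "\<dots> = measure sphere_measure (Cap (pole::'a) t) - measure sphere_measure (Cap (pole::'a) s)"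
    using assms cos_monotone_0_pi_le[of s t]
    by (intro finite_measure_Diff sets_Cap) (auto simp: Cap_def)
  finally show ?thesis
    by (simp add: cap_delta_eq_measure_Cap_pole)
qed

lemma cap_delta_pos:
  assumes "DIM('a::euclidean_space) \<ge> 2" "0 < t" "t \<le> pi/2"
  shows "0 < cap_delta TYPE('a) t"
  using cap_delta_less[OF assms(1), of 0 t] cap_delta_0[OF assms(1)] assms(2,3) by simp

lemma continuous_on_cap_delta:
  assumes "DIM('a::euclidean_space) \<ge> 2"
  shows "continuous_on A (cap_delta TYPE('a))"
proof -
  interpret prob_space "sphere_measure :: 'a measure"
    by (rule prob_space_sphere_measure)
  let ?g = "\<lambda>v::'a. \<bar>pole \<bullet> v\<bar>"
  let ?D = "distr sphere_measure borel ?g"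
  have g: "?g \<in> borel_measurable sphere_measure"
    by (intro borel_measurable_sphere_measureI borel_measurable_continuous_onI continuous_intros)
  interpret D: real_distribution ?D
    using g by simp
  have level: "{v \<in> sphere 0 1. ?g v = c} \<in> null_sets sphere_measure" for c
    by (rule sphere_level_null[OF assms norm_pole])
  have measure_D: "measure ?D B = measure sphere_measure {v \<in> sphere 0 1. ?g v \<in> B}"
    if "B \<in> sets borel" for B
    using measure_distr[OF g, of B] that by (simp add: vimage_def Int_def conj_commute)
  have "cdf ?D (cos t) = 1 - cap_delta TYPE('a) t" for t
  proof -
    have "cdf ?D (cos t) = measure sphere_measure {v \<in> sphere 0 1. ?g v \<in> {..cos t}}"
      unfolding cdf_def by (rule measure_D) simp
    also have "{v \<in> sphere 0 1. ?g v \<in> {..cos t}} =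
        (space sphere_measure - Cap pole t) \<union> {v \<in> sphere 0 1. ?g v = cos t}"
      by (auto simp: Cap_def)
    also have "measure sphere_measure \<dots> = measure sphere_measure (space sphere_measure - Cap (pole::'a) t)"
      by (intro measure_Un_null_set sets.compl_sets sets_Cap level)
    finally show ?thesis
      using prob_compl[OF sets_Cap, of pole t] by (simp add: cap_delta_eq_measure_Cap_pole)
  qed
  moreover have "isCont (cdf ?D) c" for c
    using measure_D[of "{c}"] level[of c] by (simp add: D.isCont_cdf measure_def null_setsD1)
  then have "isCont (\<lambda>t. cdf ?D (cos t)) t" for t
    by (rule isCont_o2[OF isCont_cos])
  then have "continuous_on A (\<lambda>t. 1 - cdf ?D (cos t))"
    by (intro continuous_at_imp_continuous_on ballI continuous_intros)
  ultimately show ?thesis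
    by simp
qed

lemma cap_delta_inv_bounded:
  assumes "DIM('a::euclidean_space) \<ge> 2" "0 < \<epsilon>" "\<epsilon> < 1"
  shows "0 < cap_delta_inv TYPE('a) \<epsilon>" "cap_delta_inv TYPE('a) \<epsilon> \<le> pi/2"
proof -
  have "\<exists>\<theta>. 0 \<le> \<theta> \<and> \<theta> \<le> pi/2 \<and> cap_delta TYPE('a) \<theta> = \<epsilon>"
    using assms
    by (intro IVT') (simp_all add: cap_delta_0 cap_delta_pi_half continuous_on_cap_delta)
  then obtain \<theta> where \<theta>: "\<theta> \<in> {0..pi/2}" "cap_delta TYPE('a) \<theta> = \<epsilon>"
    by auto
  have uniq: "\<theta>' = \<theta>" if "\<theta>' \<in> {0..pi/2}" "cap_delta TYPE('a) \<theta>' = \<epsilon>" for \<theta>'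
  proof (rule ccontr)
    assume "\<theta>' \<noteq> \<theta>"
    then consider "\<theta>' < \<theta>" | "\<theta> < \<theta>'"
      by linarith
    then show False
    proof cases
      case 1
      then have "cap_delta TYPE('a) \<theta>' < cap_delta TYPE('a) \<theta>"
        using that(1) \<theta>(1) by (intro cap_delta_less[OF assms(1)]) auto
      then show False
        using that(2) \<theta>(2) by simp
    next
      case 2
      then have "cap_delta TYPE('a) \<theta> < cap_delta TYPE('a) \<theta>'"
        using that(1) \<theta>(1) by (intro cap_delta_less[OF assms(1)]) auto
      then show False
        using that(2) \<theta>(2) by simp
    qed
  qed
  have "cap_delta_inv TYPE('a) \<epsilon> = \<theta>"
    unfolding cap_delta_inv_def by (rule the_equality) (use \<theta> uniq in blast)+
  moreover have "\<theta> \<noteq> 0"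
    using \<theta>(2) assms by (auto simp: cap_delta_0)
  ultimately show "0 < cap_delta_inv TYPE('a) \<epsilon>" "cap_delta_inv TYPE('a) \<epsilon> \<le> pi/2"
    using \<theta> by auto
qed

section \<open>Angles between lines and nets of caps\<close>

lemma inner_unit_vectors_ge:
  fixes x y z :: "'a::euclidean_space"
  assumes "norm x = 1" "norm y = 1" "norm z = 1"
  shows "(x \<bullet> y) * (y \<bullet> z) - sqrt (1 - (x \<bullet> y)^2) * sqrt (1 - (y \<bullet> z)^2) \<le> x \<bullet> z"
proof -
  define u where "u = x - (x \<bullet> y) *\<^sub>R y"
  define w where "w = z - (y \<bullet> z) *\<^sub>R y"
  have unit: "x \<bullet> x = 1" "y \<bullet> y = 1" "z \<bullet> z = 1"
    using assms by (simp_all add: dot_square_norm)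
  have "u \<bullet> w = x \<bullet> z - (x \<bullet> y) * (y \<bullet> z)"
    by (simp add: u_def w_def inner_diff_left inner_diff_right unit inner_commute algebra_simps)
  moreover have "norm u = sqrt (1 - (x \<bullet> y)^2)" "norm w = sqrt (1 - (y \<bullet> z)^2)"
    by (simp_all add: norm_eq_sqrt_inner u_def w_def inner_diff_left inner_diff_right unit
        inner_commute algebra_simps power2_eq_square)
  moreover have "- (norm u * norm w) \<le> u \<bullet> w"
    using Cauchy_Schwarz_ineq2[of u w] by linarith
  ultimately show ?thesis
    by simp
qed

lemma cos_add_le_product_bound:
  assumes "0 \<le> a" "a \<le> pi/2" "0 \<le> b" "b \<le> pi/2"
    and "cos a \<le> p" "p \<le> 1" "cos b \<le> q" "q \<le> 1"
  shows "cos (a + b) \<le> p * q - sqrt (1 - p^2) * sqrt (1 - q^2)"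
proof -
  have cs: "0 \<le> cos a" "0 \<le> sin a" "0 \<le> cos b" "0 \<le> sin b"
    using assms by (auto intro!: cos_ge_zero sin_ge_zero)
  have "sqrt (1 - p^2) \<le> sin a" if "0 \<le> cos a" "0 \<le> sin a" "cos a \<le> p" for a p :: real
  proof -
    have "cos a ^ 2 \<le> p ^ 2"
      using that by (intro power_mono) auto
    then have "1 - p^2 \<le> sin a ^ 2"
      using sin_cos_squared_add[of a] by linarith
    then show ?thesis
      using that real_sqrt_le_mono by fastforce
  qed
  moreover have "p^2 \<le> 1" "q^2 \<le> 1"
    using assms cs by (auto intro!: power_le_one)
  ultimately have "sqrt (1 - p^2) * sqrt (1 - q^2) \<le> sin a * sin b"
    using assms cs by (intro mult_mono) auto
  moreover have "cos a * cos b \<le> p * q"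
    using assms cs by (intro mult_mono) auto
  ultimately show ?thesis
    by (simp add: cos_add)
qed

lemma Cap_commute: "x \<in> sphere 0 1 \<Longrightarrow> y \<in> sphere 0 1 \<Longrightarrow> x \<in> Cap y t \<longleftrightarrow> y \<in> Cap x t"
  by (auto simp: Cap_def inner_commute)

text \<open>Triangle inequality for the angle \<open>arccos \<bar>x \<bullet> y\<bar>\<close> between lines.\<close>
lemma Cap_trans:
  assumes "norm y = 1" "x \<in> Cap y a" "v \<in> Cap y b"
    and "0 \<le> a" "a \<le> pi/2" "0 \<le> b" "b \<le> pi/2"
  shows "v \<in> Cap x (a + b)"
proof -
  obtain x' v' where x': "norm x' = 1" "x' \<bullet> y = \<bar>y \<bullet> x\<bar>" "\<bar>x \<bullet> v\<bar> = \<bar>x' \<bullet> v'\<bar>"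
    and v': "norm v' = 1" "y \<bullet> v' = \<bar>y \<bullet> v\<bar>"
  proof
    show "norm (if 0 \<le> y \<bullet> x then x else - x) = 1" "norm (if 0 \<le> y \<bullet> v then v else - v) = 1"
      using assms(2,3) by (auto simp: Cap_def)
  qed (auto simp: inner_commute)
  have "\<bar>y \<bullet> x\<bar> \<le> 1" "\<bar>y \<bullet> v\<bar> \<le> 1"
    using assms(1-3) Cauchy_Schwarz_ineq2[of y x] Cauchy_Schwarz_ineq2[of y v] by (auto simp: Cap_def)
  then have "cos (a + b) \<le> (x' \<bullet> y) * (y \<bullet> v') - sqrt (1 - (x' \<bullet> y)^2) * sqrt (1 - (y \<bullet> v')^2)"
    using assms(2-7) x'(2) v'(2) by (intro cos_add_le_product_bound) (auto simp: Cap_def)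
  also have "\<dots> \<le> \<bar>x \<bullet> v\<bar>"
    using inner_unit_vectors_ge[OF x'(1) assms(1) v'(1)] x'(3) by linarith
  finally show ?thesis
    using assms(3) by (simp add: Cap_def)
qed

definition cap_separated :: "real \<Rightarrow> 'a::euclidean_space set \<Rightarrow> bool" where
  "cap_separated t Y \<longleftrightarrow> Y \<subseteq> sphere 0 1 \<and> pairwise (\<lambda>y y'. y' \<notin> Cap y t) Y"

lemma card_cap_separated_le:
  fixes Y :: "'a::euclidean_space set"
  assumes "finite Y" "cap_separated (2 * t) Y" "0 \<le> t" "t \<le> pi/2"
  shows "real (card Y) * cap_delta TYPE('a) t \<le> 1"
proof -
  interpret prob_space "sphere_measure :: 'a measure"
    by (rule prob_space_sphere_measure)
  have Y: "Y \<subseteq> sphere 0 1" "pairwise (\<lambda>y y'. y' \<notin> Cap y (2 * t)) Y"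
    using assms(2) by (auto simp: cap_separated_def)
  have "disjoint_family_on (\<lambda>y. Cap y t) Y"
    unfolding disjoint_family_on_def
  proof (intro ballI impI, rule ccontr)
    fix y y' assume yy': "y \<in> Y" "y' \<in> Y" "y \<noteq> y'" "Cap y t \<inter> Cap y' t \<noteq> {}"
    then obtain v where v: "v \<in> Cap y t" "v \<in> Cap y' t"
      by blast
    then have "norm v = 1" "y \<in> Cap v t" "y' \<in> Cap v t"
      using Y(1) yy' Cap_commute[of v] by (auto simp: Cap_def)
    then have "y' \<in> Cap y (t + t)"
      using assms(3,4) by (intro Cap_trans) auto
    then show False
      using Y(2) yy' by (auto simp: pairwise_def)
  qed
  then have "measure sphere_measure (\<Union>y\<in>Y. Cap y t) = (\<Sum>y\<in>Y. measure sphere_measure (Cap y t))"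
    using assms(1) by (intro finite_measure_finite_Union) (auto intro: sets_Cap)
  also have "\<dots> = real (card Y) * cap_delta TYPE('a) t"
    using Y(1) by (simp add: measure_Cap subset_iff)
  finally show ?thesis
    using prob_le_1 by metis
qed

lemma cap_separated_insert:
  assumes "cap_separated t Y" "x \<in> sphere 0 1" "x \<notin> (\<Union>y\<in>Y. Cap y t)"
  shows "x \<notin> Y" "cap_separated t (insert x Y)"
proof -
  have "x \<in> Cap x t"
    using assms(2) by (simp add: Cap_def dot_square_norm)
  then show "x \<notin> Y"
    using assms(3) by blast
  have "y \<notin> Cap x t" "x \<notin> Cap y t" if "y \<in> Y" for y
    using that assms Cap_commute[OF assms(2), of y t] by (auto simp: cap_separated_def)
  then show "cap_separated t (insert x Y)"
    using assms(1,2) by (simp add: cap_separated_def pairwise_insert)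
qed

text \<open>A maximal separated set is a net, and packing disjoint caps bounds its size.\<close>
lemma exists_cap_net:
  assumes "DIM('a) \<ge> 2" "0 < t" "t \<le> pi/2"
  obtains Y :: "'a::euclidean_space set" where "finite Y" "Y \<subseteq> sphere 0 1" "sphere 0 1 \<subseteq> (\<Union>y\<in>Y. Cap y t)"
    "real (card Y) * cap_delta TYPE('a) (t/2) \<le> 1"
proof -
  let ?P = "\<lambda>Y::'a set. finite Y \<and> cap_separated t Y"
  have card_le: "real (card Y) * cap_delta TYPE('a) (t/2) \<le> 1" if "?P Y" for Y
    using card_cap_separated_le[of Y "t/2"] that assms by simp
  have "0 < cap_delta TYPE('a) (t/2)"
    using assms by (intro cap_delta_pos) auto
  then have "real (card Y) \<le> 1 / cap_delta TYPE('a) (t/2)" if "?P Y" for Y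
    using card_le[OF that] by (simp add: pos_le_divide_eq)
  then have "card Y < nat \<lfloor>1 / cap_delta TYPE('a) (t/2)\<rfloor> + 1" if "?P Y" for Y
    using le_nat_floor that by fastforce
  moreover have "?P {}"
    by (simp add: cap_separated_def)
  ultimately have "\<exists>Y. ?P Y \<and> (\<forall>Y'. ?P Y' \<longrightarrow> card Y' \<le> card Y)"
    by (intro ex_has_greatest_nat[of ?P "{}" card]) auto
  then obtain Y where "?P Y \<and> (\<forall>Y'. ?P Y' \<longrightarrow> card Y' \<le> card Y)" ..
  then have Y: "?P Y" and max: "\<And>Y'. ?P Y' \<Longrightarrow> card Y' \<le> card Y"
    by blast+
  have "x \<in> (\<Union>y\<in>Y. Cap y t)" if x: "x \<in> sphere 0 1" for x
  proof (rule ccontr)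
    assume "x \<notin> (\<Union>y\<in>Y. Cap y t)"
    then have "x \<notin> Y" "?P (insert x Y)"
      using cap_separated_insert[OF _ x] Y by auto
    then show False
      using max[of "insert x Y"] Y by simp
  qed
  then show ?thesis
    using Y card_le[OF Y] by (intro that) (auto simp: cap_separated_def)
qed

section \<open>Random labelled points\<close>

lemma countable_dense_subset:
  fixes S :: "'a::second_countable_topology set"
  obtains D where "countable D" "D \<subseteq> S" "S \<subseteq> closure D"
proof -
  obtain B :: "'a set set" where B: "countable B" "topological_basis B"
    using ex_countable_basis by blast
  define D where "D = (\<lambda>b. SOME x. x \<in> b \<inter> S) ` {b \<in> B. b \<inter> S \<noteq> {}}"
  have pick: "(SOME x. x \<in> b \<inter> S) \<in> b \<inter> S" if "b \<inter> S \<noteq> {}" for b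
    using that by (metis ex_in_conv someI_ex)
  have "countable D"
    using B(1) by (simp add: D_def)
  moreover have "D \<subseteq> S"
    using pick by (auto simp: D_def)
  moreover have "x \<in> closure D" if "x \<in> S" for x
    unfolding closure_iff_nhds_not_empty
  proof (intro allI impI)
    fix A U assume "U \<subseteq> A" "open U" "x \<in> U"
    then obtain b where "b \<in> B" "x \<in> b" "b \<subseteq> U"
      using B(2) topological_basisE by blast
    then have "(SOME x. x \<in> b \<inter> S) \<in> D \<inter> A"
      using pick[of b] \<open>x \<in> S\<close> \<open>U \<subseteq> A\<close> by (auto simp: D_def)
    then show "D \<inter> A \<noteq> {}"
      by blast
  qed
  ultimately show ?thesis
    using that by blast
qed

lemma closed_Cap_centres: "closed {x. v \<in> Cap x t}"
proof (cases "v \<in> sphere 0 1")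
  case True
  then have "{x. v \<in> Cap x t} = {x. cos t \<le> \<bar>x \<bullet> v\<bar>}"
    by (auto simp: Cap_def)
  then show ?thesis
    by (simp add: closed_Collect_le continuous_intros)
qed (simp add: Cap_def)

lemma prob_space_sphere_label_measure:
  "0 < M \<Longrightarrow> prob_space (sphere_label_measure M :: ('a::euclidean_space \<times> nat) measure)"
  unfolding sphere_label_measure_def
  by (intro prob_space_pair prob_space_sphere_measure prob_space_uniform_count_measure) auto

lemma sets_Cap_times:
  "\<sigma> \<in> {1..M} \<Longrightarrow> Cap y t \<times> {\<sigma>} \<in> sets (sphere_label_measure M :: ('a::euclidean_space \<times> nat) measure)"
  unfolding sphere_label_measure_def
  by (intro pair_measureI sets_Cap) (simp add: sets_uniform_count_measure)

lemma measure_Cap_times: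
  fixes y :: "'a::euclidean_space"
  assumes "norm y = 1" "\<sigma> \<in> {1..M}"
  shows "measure (sphere_label_measure M :: ('a \<times> nat) measure) (Cap y t \<times> {\<sigma>}) = cap_delta TYPE('a) t / M"
proof -
  interpret pair_prob_space "sphere_measure :: 'a measure" "uniform_count_measure {1..M}"
    using assms(2) by (intro pair_prob_space.intro pair_sigma_finite.intro prob_space_imp_sigma_finite
        prob_space_sphere_measure prob_space_uniform_count_measure) auto
  have \<sigma>: "{\<sigma>} \<in> sets (uniform_count_measure {1..M})"
    using assms(2) by (simp add: sets_uniform_count_measure)
  have "measure (sphere_measure \<Otimes>\<^sub>M uniform_count_measure {1..M}) (Cap y t \<times> {\<sigma>}) =
      measure sphere_measure (Cap y t) * measure (uniform_count_measure {1..M}) {\<sigma>}"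
    unfolding measure_def M2.emeasure_pair_measure_Times[OF sets_Cap \<sigma>] by (rule enn2real_mult)
  then show ?thesis
    using assms by (simp add: sphere_label_measure_def measure_Cap measure_uniform_count_measure)
qed

lemma is_covering_image_iff:
  "is_covering TYPE('a::euclidean_space) M \<epsilon> (\<omega> ` I) \<longleftrightarrow>
    (\<forall>x\<in>sphere 0 1. \<forall>\<sigma>\<in>{1..M}. \<exists>i\<in>I. \<omega> i \<in> Cap x (cap_delta_inv TYPE('a) \<epsilon>) \<times> {\<sigma>})"
proof -
  have "(\<exists>z\<in>sphere 0 1. (z, \<sigma>) \<in> \<omega> ` I \<and> c \<le> \<bar>z \<bullet> x\<bar>) \<longleftrightarrow> (\<exists>i\<in>I. \<omega> i \<in> Cap x \<theta> \<times> {\<sigma>})"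
    if "c = cos \<theta>" for x :: 'a and \<sigma> c \<theta>
  proof
    assume "\<exists>z\<in>sphere 0 1. (z, \<sigma>) \<in> \<omega> ` I \<and> c \<le> \<bar>z \<bullet> x\<bar>"
    then obtain z i where zi: "z \<in> sphere 0 1" "i \<in> I" "\<omega> i = (z, \<sigma>)" "c \<le> \<bar>z \<bullet> x\<bar>"
      by (metis imageE)
    then have "\<omega> i \<in> Cap x \<theta> \<times> {\<sigma>}"
      using that by (simp add: Cap_def inner_commute)
    then show "\<exists>i\<in>I. \<omega> i \<in> Cap x \<theta> \<times> {\<sigma>}"
      using zi(2) by (rule bexI)
  next
    assume "\<exists>i\<in>I. \<omega> i \<in> Cap x \<theta> \<times> {\<sigma>}"
    then obtain i where "i \<in> I" "fst (\<omega> i) \<in> Cap x \<theta>" "\<omega> i = (fst (\<omega> i), \<sigma>)"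
      by (metis mem_Times_iff prod.collapse singletonD)
    then show "\<exists>z\<in>sphere 0 1. (z, \<sigma>) \<in> \<omega> ` I \<and> c \<le> \<bar>z \<bullet> x\<bar>"
      using that by (metis (mono_tags, lifting) Cap_def mem_Collect_eq image_eqI inner_commute)
  qed
  then show ?thesis
    unfolding is_covering_def by simp
qed

lemma hits_Caps_iff_dense:
  fixes D :: "'a::euclidean_space set"
  assumes "finite I" "D \<subseteq> sphere 0 1" "sphere 0 1 \<subseteq> closure D"
  shows "(\<forall>x\<in>sphere 0 1. \<forall>\<sigma>\<in>S. \<exists>i\<in>I. \<omega> i \<in> Cap x t \<times> {\<sigma>}) \<longleftrightarrow>
    (\<forall>\<sigma>\<in>S. \<forall>d\<in>D. \<exists>i\<in>I. \<omega> i \<in> Cap d t \<times> {\<sigma>})"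
proof (intro iffI ballI)
  fix \<sigma> d assume "\<forall>x\<in>sphere 0 1. \<forall>\<sigma>\<in>S. \<exists>i\<in>I. \<omega> i \<in> Cap x t \<times> {\<sigma>}" "\<sigma> \<in> S" "d \<in> D"
  then show "\<exists>i\<in>I. \<omega> i \<in> Cap d t \<times> {\<sigma>}"
    using assms(2) by blast
next
  fix x :: 'a and \<sigma> assume hits: "\<forall>\<sigma>\<in>S. \<forall>d\<in>D. \<exists>i\<in>I. \<omega> i \<in> Cap d t \<times> {\<sigma>}"
    and x: "x \<in> sphere 0 1" and \<sigma>: "\<sigma> \<in> S"
  let ?F = "\<Union>i\<in>{i \<in> I. snd (\<omega> i) = \<sigma>}. {x. fst (\<omega> i) \<in> Cap x t}"
  have "closed ?F"
    using assms(1) by (intro closed_UN) (auto simp: closed_Cap_centres)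
  moreover have "D \<subseteq> ?F"
    using hits \<sigma> by (force simp: mem_Times_iff)
  ultimately have "closure D \<subseteq> ?F"
    by (rule closure_minimal[rotated])
  then have "x \<in> ?F"
    using assms(3) x by blast
  then show "\<exists>i\<in>I. \<omega> i \<in> Cap x t \<times> {\<sigma>}"
    by (force simp: mem_Times_iff)
qed

lemma sets_hits_all_Caps:
  fixes M :: nat and I :: "'i set"
  assumes "finite I"
  shows "{\<omega> \<in> space (PiM I (\<lambda>_. sphere_label_measure M :: ('a::euclidean_space \<times> nat) measure)).
      \<forall>x\<in>sphere 0 1. \<forall>\<sigma>\<in>{1..M}. \<exists>i\<in>I. \<omega> i \<in> Cap x t \<times> {\<sigma>}}
    \<in> sets (PiM I (\<lambda>_. sphere_label_measure M :: ('a \<times> nat) measure))"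
proof -
  let ?P = "PiM I (\<lambda>_. sphere_label_measure M :: ('a \<times> nat) measure)"
  obtain D :: "'a set" where D: "countable D" "D \<subseteq> sphere 0 1" "sphere 0 1 \<subseteq> closure D"
    using countable_dense_subset by blast
  have "{\<omega> \<in> space ?P. \<forall>x\<in>sphere 0 1. \<forall>\<sigma>\<in>{1..M}. \<exists>i\<in>I. \<omega> i \<in> Cap x t \<times> {\<sigma>}} =
      {\<omega> \<in> space ?P. \<forall>\<sigma>\<in>{1..M}. \<forall>d\<in>D. \<exists>i\<in>I. \<omega> i \<in> Cap d t \<times> {\<sigma>}}"
    by (intro Collect_cong conj_cong refl hits_Caps_iff_dense[OF assms D(2,3)])
  also have "\<dots> \<in> sets ?P"
  proof (rule sets.sets_Collect_countable_All')
    fix \<sigma> assume \<sigma>: "\<sigma> \<in> {1..M}"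
    show "{\<omega> \<in> space ?P. \<forall>d\<in>D. \<exists>i\<in>I. \<omega> i \<in> Cap d t \<times> {\<sigma>}} \<in> sets ?P"
    proof (rule sets.sets_Collect_countable_All'[OF _ D(1)])
      fix d
      show "{\<omega> \<in> space ?P. \<exists>i\<in>I. \<omega> i \<in> Cap d t \<times> {\<sigma>}} \<in> sets ?P"
      proof (rule sets.sets_Collect_finite_Ex[OF _ assms])
        fix i assume "i \<in> I"
        have "(\<lambda>\<omega>. \<omega> i) -` (Cap d t \<times> {\<sigma>}) \<inter> space ?P \<in> sets ?P"
          by (rule measurable_sets[OF measurable_component_singleton[OF \<open>i \<in> I\<close>] sets_Cap_times[OF \<sigma>]])
        moreover have "(\<lambda>\<omega>. \<omega> i) -` (Cap d t \<times> {\<sigma>}) \<inter> space ?P = {\<omega> \<in> space ?P. \<omega> i \<in> Cap d t \<times> {\<sigma>}}"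
          by blast
        ultimately show "{\<omega> \<in> space ?P. \<omega> i \<in> Cap d t \<times> {\<sigma>}} \<in> sets ?P"
          by simp
      qed
    qed
  qed simp
  finally show ?thesis .
qed

lemma covering_if_hits_net:
  fixes Y :: "'a::euclidean_space set"
  assumes "Y \<subseteq> sphere 0 1" "sphere 0 1 \<subseteq> (\<Union>y\<in>Y. Cap y (t/2))" "0 \<le> t" "t \<le> pi"
    and hits: "\<forall>y\<in>Y. \<forall>\<sigma>\<in>S. \<exists>i\<in>I. \<omega> i \<in> Cap y (t/2) \<times> {\<sigma>}"
  shows "\<forall>x\<in>sphere 0 1. \<forall>\<sigma>\<in>S. \<exists>i\<in>I. \<omega> i \<in> Cap x t \<times> {\<sigma>}"
proof (intro ballI)
  fix x :: 'a and \<sigma> assume "x \<in> sphere 0 1" "\<sigma> \<in> S"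
  then obtain y where y: "y \<in> Y" "x \<in> Cap y (t/2)"
    using assms(2) by blast
  have "\<exists>i\<in>I. \<omega> i \<in> Cap y (t/2) \<times> {\<sigma>}"
    using hits y(1) \<open>\<sigma> \<in> S\<close> by simp
  then obtain i where i: "i \<in> I" "\<omega> i \<in> Cap y (t/2) \<times> {\<sigma>}" ..
  have "fst (\<omega> i) \<in> Cap x (t/2 + t/2)"
    using y i assms(1,3,4) by (intro Cap_trans) (auto simp: mem_Times_iff)
  with i show "\<exists>i\<in>I. \<omega> i \<in> Cap x t \<times> {\<sigma>}"
    by (auto simp: mem_Times_iff)
qed

lemma (in prob_space) measure_PiM_PiE_compl:
  assumes "finite I" "A \<in> events"
  shows "measure (PiM I (\<lambda>_. M)) (PiE I (\<lambda>_. space M - A)) = (1 - prob A) ^ card I"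
proof -
  have compl: "prob (space M - A) = 1 - prob A"
    using assms(2) by (rule prob_compl)
  interpret finite_product_prob_space "\<lambda>_. M" I
    using assms(1) by unfold_locales
  show ?thesis
    using assms(2) by (simp add: prob_times compl)
qed

lemma missed_cap_event:
  fixes Y :: "'a::euclidean_space set" and M N :: nat and t :: real
  defines "P \<equiv> PiM {..<N} (\<lambda>_. sphere_label_measure M :: ('a \<times> nat) measure)"
  defines "Miss \<equiv> {\<omega> \<in> space P. \<exists>y\<in>Y. \<exists>\<sigma>\<in>{1..M}. \<forall>i\<in>{..<N}. \<omega> i \<notin> Cap y t \<times> {\<sigma>}}"
  assumes "0 < M" "finite Y" "Y \<subseteq> sphere 0 1"
  shows "Miss \<in> sets P"
    and "measure P Miss \<le> real (card Y) * real M * (1 - cap_delta TYPE('a) t / M) ^ N"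
proof -
  let ?SL = "sphere_label_measure M :: ('a \<times> nat) measure"
  interpret SL: prob_space ?SL
    using assms(3) by (rule prob_space_sphere_label_measure)
  let ?E = "\<lambda>p. PiE {..<N} (\<lambda>_. space ?SL - Cap (fst p) t \<times> {snd p})"
  have E_sets: "?E p \<in> sets P" if "p \<in> Y \<times> {1..M}" for p
    using that unfolding P_def by (auto intro!: sets_PiM_I_finite sets_Cap_times)
  have "Miss = (\<Union>p\<in>Y \<times> {1..M}. ?E p)"
  proof (intro set_eqI iffI)
    fix \<omega> assume "\<omega> \<in> Miss"
    then obtain y \<sigma> where y\<sigma>: "\<omega> \<in> space P" "y \<in> Y" "\<sigma> \<in> {1..M}"
      "\<forall>i\<in>{..<N}. \<omega> i \<notin> Cap y t \<times> {\<sigma>}"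
      unfolding Miss_def by blast
    then have "\<omega> \<in> ?E (y, \<sigma>)"
      unfolding P_def space_PiM PiE_iff by simp
    moreover have "(y, \<sigma>) \<in> Y \<times> {1..M}"
      using y\<sigma>(2,3) by simp
    ultimately show "\<omega> \<in> (\<Union>p\<in>Y \<times> {1..M}. ?E p)"
      by (intro UN_I)
  next
    fix \<omega> assume "\<omega> \<in> (\<Union>p\<in>Y \<times> {1..M}. ?E p)"
    then obtain p where p: "p \<in> Y \<times> {1..M}" "\<omega> \<in> ?E p"
      by (rule UN_E)
    have "\<omega> \<in> space P"
      using p(2) unfolding P_def space_PiM PiE_iff by blast
    moreover have "\<forall>i\<in>{..<N}. \<omega> i \<notin> Cap (fst p) t \<times> {snd p}"
      using PiE_mem[OF p(2)] by simp
    moreover have "fst p \<in> Y" "snd p \<in> {1..M}"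
      using p(1) by (simp_all add: mem_Times_iff)
    ultimately show "\<omega> \<in> Miss"
      unfolding Miss_def by blast
  qed
  moreover have "measure P (\<Union>p\<in>Y \<times> {1..M}. ?E p) \<le> (\<Sum>p\<in>Y \<times> {1..M}. measure P (?E p))"
    using assms(4) E_sets by (intro measure_UNION_le) auto
  moreover have "measure P (?E p) = (1 - cap_delta TYPE('a) t / M) ^ N" if "p \<in> Y \<times> {1..M}" for p
    using that assms(5) unfolding P_def
    by (auto simp: SL.measure_PiM_PiE_compl sets_Cap_times measure_Cap_times)
  ultimately show "Miss \<in> sets P" "measure P Miss \<le> real (card Y) * real M * (1 - cap_delta TYPE('a) t / M) ^ N"
    using assms(4) E_sets by (auto simp: card_cartesian_product)
qed

text \<open>Union bound over the \<open>card Y * M\<close> events that a labelled cap around the net is missed.\<close>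
lemma prob_hits_all_Caps_ge:
  fixes Y :: "'a::euclidean_space set" and M N :: nat and t :: real
  defines "P \<equiv> PiM {..<N} (\<lambda>_. sphere_label_measure M :: ('a \<times> nat) measure)"
  assumes "0 < M" "finite Y" "Y \<subseteq> sphere 0 1" "sphere 0 1 \<subseteq> (\<Union>y\<in>Y. Cap y (t/2))" "0 \<le> t" "t \<le> pi"
  shows "1 - real (card Y) * real M * (1 - cap_delta TYPE('a) (t/2) / M) ^ N
    \<le> measure P {\<omega> \<in> space P. \<forall>x\<in>sphere 0 1. \<forall>\<sigma>\<in>{1..M}. \<exists>i\<in>{..<N}. \<omega> i \<in> Cap x t \<times> {\<sigma>}}"
proof -
  let ?G = "{\<omega> \<in> space P. \<forall>x\<in>sphere 0 1. \<forall>\<sigma>\<in>{1..M}. \<exists>i\<in>{..<N}. \<omega> i \<in> Cap x t \<times> {\<sigma>}}"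
  let ?Miss = "{\<omega> \<in> space P. \<exists>y\<in>Y. \<exists>\<sigma>\<in>{1..M}. \<forall>i\<in>{..<N}. \<omega> i \<notin> Cap y (t/2) \<times> {\<sigma>}}"
  interpret prob_space P
    unfolding P_def using assms(2) by (intro prob_space_PiM prob_space_sphere_label_measure)
  have Miss: "?Miss \<in> sets P" "measure P ?Miss \<le> real (card Y) * real M * (1 - cap_delta TYPE('a) (t/2) / M) ^ N"
    unfolding P_def by (rule missed_cap_event[OF assms(2-4)])+
  have "\<omega> \<in> ?G" if "\<omega> \<in> space P - ?Miss" for \<omega>
  proof -
    have "\<forall>y\<in>Y. \<forall>\<sigma>\<in>{1..M}. \<exists>i\<in>{..<N}. \<omega> i \<in> Cap y (t/2) \<times> {\<sigma>}"
      using that by simp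
    then show ?thesis
      using that covering_if_hits_net[OF assms(4-7)] by simp
  qed
  then have "space P - ?Miss \<subseteq> ?G"
    by (rule subsetI)
  moreover have "?G \<in> sets P"
    unfolding P_def by (rule sets_hits_all_Caps) simp
  ultimately have "measure P (space P - ?Miss) \<le> measure P ?G"
    by (rule finite_measure_mono)
  then show ?thesis
    using Miss by (simp add: prob_compl)
qed

theorem lemma2:
  fixes M N :: nat and \<epsilon> :: real
  assumes "DIM('a::euclidean_space) \<ge> 2"
    and "M > 0" and "N > 0"
    and "0 < \<epsilon>" and "\<epsilon> < 1"
  shows "measure (PiM {..<N} (\<lambda>_. sphere_label_measure M :: ('a \<times> nat) measure))
            {\<omega> \<in> space (PiM {..<N} (\<lambda>_. sphere_label_measure M :: ('a \<times> nat) measure)).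
               is_covering TYPE('a) M \<epsilon> (\<omega> ` {..<N})}
         \<ge> 1 - real M * (1 - cap_delta TYPE('a) (cap_delta_inv TYPE('a) \<epsilon> / 2) / real M) ^ N
                 / cap_delta TYPE('a) (cap_delta_inv TYPE('a) \<epsilon> / 4)"
proof -
  define \<theta> where "\<theta> = cap_delta_inv TYPE('a) \<epsilon>"
  define q where "q = (1 - cap_delta TYPE('a) (\<theta>/2) / real M) ^ N"
  have \<theta>: "0 < \<theta>" "\<theta> \<le> pi/2"
    using cap_delta_inv_bounded[OF assms(1,4,5)] by (simp_all add: \<theta>_def)
  obtain Y :: "'a set" where Y: "finite Y" "Y \<subseteq> sphere 0 1" "sphere 0 1 \<subseteq> (\<Union>y\<in>Y. Cap y (\<theta>/2))"
    and card_Y: "real (card Y) * cap_delta TYPE('a) (\<theta>/4) \<le> 1"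
    using exists_cap_net[OF assms(1), of "\<theta>/2"] \<theta> by (auto simp: field_simps)
  have "0 < cap_delta TYPE('a) (\<theta>/4)"
    using \<theta> by (intro cap_delta_pos[OF assms(1)]) auto
  moreover have "cap_delta TYPE('a) (\<theta>/2) \<le> 1" "1 \<le> real M"
    using cap_delta_le_1 assms(2) by auto
  then have "0 \<le> real M * q"
    by (simp add: q_def divide_le_eq)
  ultimately have "real (card Y) * (real M * q) \<le> 1 / cap_delta TYPE('a) (\<theta>/4) * (real M * q)"
    using card_Y by (intro mult_right_mono) (simp_all add: pos_le_divide_eq)
  moreover have "1 - real (card Y) * real M * q \<le> measure (PiM {..<N} (\<lambda>_. sphere_label_measure M))
      {\<omega> \<in> space (PiM {..<N} (\<lambda>_. sphere_label_measure M)). is_covering TYPE('a) M \<epsilon> (\<omega> ` {..<N})}"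
    using prob_hits_all_Caps_ge[OF assms(2) Y] \<theta>
    by (simp add: is_covering_image_iff \<theta>_def q_def)
  ultimately show ?thesis
    by (simp add: \<theta>_def q_def mult.assoc)
qed

end
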